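(* Let $\varphi_1,\varphi_2\in L^2(\mathbb{R}^3)$ be orthonormal, and for each $N\ge2$ let $N_1=N_1(N),N_2=N_2(N)\in\mathbb{N}$ with $N_1+N_2=N$ and $N_1/N\to n_1\in(0,1)$, $N_2/N\to n_2\in(0,1)$. Let $\gamma_N^{(k)}$ and $\widetilde\gamma_N^{(k)}$ be the $k$-body marginals of $\gamma_N:=|\varphi_1^{\otimes N_1}\vee\varphi_2^{\otimes N_2}\rangle\langle\varphi_1^{\otimes N_1}\vee\varphi_2^{\otimes N_2}|$ and of $\widetilde\gamma_N:=(2\pi)^{-2}\iint_{[0,2\pi]^2}|(\psi^{\theta_1,\theta_2})^{\otimes N}\rangle\langle(\psi^{\theta_1,\theta_2})^{\otimes N}|\,\mathrm{d}\theta_1\mathrm{d}\theta_2$, where $\psi^{\theta_1,\theta_2}:=\sqrt{N_1/N}\,e^{-\mathrm{i}\theta_1}\varphi_1+\sqrt{N_2/N}\,e^{-\mathrm{i}\theta_2}\varphi_2$. Then for each $k\in\mathbb{N}$ there exists $c_k\ge0$, independent of $N$, such that for all $N\ge 2$ with $N\ge k$, $$\mathrm{Tr}\big|\gamma_N^{(k)}-\widetilde\gamma_N^{(k)}\big|\le\frac{c_k}{N},$$ and moreover $c_1=0$ (i.e. $\gamma_N^{(1)}=\widetilde\gamma_N^{(1)}$).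
   Context: $\vee$ denotes the normalised symmetric tensor product (unit vector obtained by normalising the sum of all distinct arrangements of the factors). The $k$-body marginal of a density matrix $\gamma$ on $L^2_{\mathrm{sym}}(\mathbb{R}^{3N})$ is the partial trace over $N-k$ particles, with kernel $\int\gamma(x_1..x_k,Z;y_1..y_k,Z)\,\mathrm{d}Z$; $\gamma^{(N)}=\gamma$. $\mathrm{Tr}|\cdot|$ is the trace norm on $L^2_{\mathrm{sym}}(\mathbb{R}^{3k})$. *)

theory Defs
  imports "HOL-Analysis.Analysis"
begin

text \<open>Configurations of particles in R^3: a point of R^(3n) is a map
  nat => real^3, only the coordinates below n being relevant.\<close>
type_synonym cfg = "nat \<Rightarrow> real^3"

definition conf :: "nat \<Rightarrow> cfg measure" where
  "conf n = PiM {..<n} (\<lambda>_. (lborel :: (real^3) measure))"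

definition L2 :: "'a measure \<Rightarrow> ('a \<Rightarrow> complex) set" where
  "L2 M = {f. f \<in> borel_measurable M \<and> integrable M (\<lambda>x. (cmod (f x))^2)}"

definition inner_L2 :: "'a measure \<Rightarrow> ('a \<Rightarrow> complex) \<Rightarrow> ('a \<Rightarrow> complex) \<Rightarrow> complex" where
  "inner_L2 M f g = integral\<^sup>L M (\<lambda>x. cnj (f x) * g x)"

definition norm_L2 :: "'a measure \<Rightarrow> ('a \<Rightarrow> complex) \<Rightarrow> real" where
  "norm_L2 M f = sqrt (integral\<^sup>L M (\<lambda>x. (cmod (f x))^2))"

definition orthonormal_fam :: "'a measure \<Rightarrow> nat \<Rightarrow> (nat \<Rightarrow> 'a \<Rightarrow> complex) \<Rightarrow> bool" where
  "orthonormal_fam M m es \<longleftrightarrow>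
     (\<forall>i<m. \<forall>j<m. inner_L2 M (es i) (es j) = (if i = j then 1 else 0))"

definition tensor :: "(nat \<Rightarrow> (real^3 \<Rightarrow> complex)) \<Rightarrow> nat \<Rightarrow> cfg \<Rightarrow> complex" where
  "tensor fs n x = (\<Prod>i<n. fs i (x i))"

definition arrangements :: "(nat \<Rightarrow> (real^3 \<Rightarrow> complex)) \<Rightarrow> nat \<Rightarrow> (nat \<Rightarrow> (real^3 \<Rightarrow> complex)) set" where
  "arrangements fs n =
     {(\<lambda>i. if i < n then fs (\<sigma> i) else undefined) | \<sigma>. \<sigma> permutes {..<n}}"

definition symsum :: "(nat \<Rightarrow> (real^3 \<Rightarrow> complex)) \<Rightarrow> nat \<Rightarrow> cfg \<Rightarrow> complex" where
  "symsum fs n x = (\<Sum>g\<in>arrangements fs n. tensor g n x)"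

definition symprod :: "(nat \<Rightarrow> (real^3 \<Rightarrow> complex)) \<Rightarrow> nat \<Rightarrow> cfg \<Rightarrow> complex" where
  "symprod fs n x = symsum fs n x / complex_of_real (norm_L2 (conf n) (symsum fs n))"

definition vee2 :: "(real^3 \<Rightarrow> complex) \<Rightarrow> nat \<Rightarrow> (real^3 \<Rightarrow> complex) \<Rightarrow> nat \<Rightarrow> cfg \<Rightarrow> complex" where
  "vee2 \<phi>1 N1 \<phi>2 N2 = symprod (\<lambda>i. if i < N1 then \<phi>1 else \<phi>2) (N1 + N2)"

definition proj_kernel :: "(cfg \<Rightarrow> complex) \<Rightarrow> cfg \<Rightarrow> cfg \<Rightarrow> complex" where
  "proj_kernel \<Psi> x y = \<Psi> x * cnj (\<Psi> y)"

definition join :: "nat \<Rightarrow> nat \<Rightarrow> cfg \<Rightarrow> cfg \<Rightarrow> cfg" where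
  "join k n x z = (\<lambda>i. if i < k then x i else if i < k + n then z (i - k) else undefined)"

definition marginal :: "nat \<Rightarrow> nat \<Rightarrow> (cfg \<Rightarrow> cfg \<Rightarrow> complex) \<Rightarrow> cfg \<Rightarrow> cfg \<Rightarrow> complex" where
  "marginal N k K x y =
     integral\<^sup>L (conf (N - k)) (\<lambda>z. K (join k (N - k) x z) (join k (N - k) y z))"

definition psi_theta :: "(real^3 \<Rightarrow> complex) \<Rightarrow> nat \<Rightarrow> (real^3 \<Rightarrow> complex) \<Rightarrow> nat \<Rightarrow> nat
    \<Rightarrow> real \<Rightarrow> real \<Rightarrow> real^3 \<Rightarrow> complex" where
  "psi_theta \<phi>1 N1 \<phi>2 N2 N t1 t2 z =
     complex_of_real (sqrt (real N1 / real N)) * exp (- \<i> * complex_of_real t1) * \<phi>1 z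
   + complex_of_real (sqrt (real N2 / real N)) * exp (- \<i> * complex_of_real t2) * \<phi>2 z"

definition mixed_kernel :: "(real^3 \<Rightarrow> complex) \<Rightarrow> nat \<Rightarrow> (real^3 \<Rightarrow> complex) \<Rightarrow> nat \<Rightarrow> nat
    \<Rightarrow> cfg \<Rightarrow> cfg \<Rightarrow> complex" where
  "mixed_kernel \<phi>1 N1 \<phi>2 N2 N x y =
     complex_of_real (1 / (2 * pi)^2) *
     (LINT t1:{0..2*pi}|lborel. LINT t2:{0..2*pi}|lborel.
        proj_kernel (tensor (\<lambda>_. psi_theta \<phi>1 N1 \<phi>2 N2 N t1 t2) N) x y)"

definition apply_kernel :: "'a measure \<Rightarrow> ('a \<Rightarrow> 'a \<Rightarrow> complex) \<Rightarrow> ('a \<Rightarrow> complex) \<Rightarrow> 'a \<Rightarrow> complex" where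
  "apply_kernel M K f x = integral\<^sup>L M (\<lambda>y. K x y * f y)"

definition sym_fun :: "nat \<Rightarrow> (cfg \<Rightarrow> complex) \<Rightarrow> bool" where
  "sym_fun k f \<longleftrightarrow> (\<forall>\<sigma> x. \<sigma> permutes {..<k} \<longrightarrow> f (x \<circ> \<sigma>) = f x)"

definition L2sym :: "nat \<Rightarrow> (cfg \<Rightarrow> complex) set" where
  "L2sym k = {f \<in> L2 (conf k). sym_fun k f}"

text \<open>Trace norm on L^2_sym(R^(3k)) of the operator with kernel K:
  Tr|A| = sup of sum_i |<e_i, A f_i>| over finite orthonormal families
  (e_i), (f_i) (value infinity if A is not trace class).\<close>
definition trace_norm :: "nat \<Rightarrow> (cfg \<Rightarrow> cfg \<Rightarrow> complex) \<Rightarrow> ennreal" where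
  "trace_norm k K = Sup {ennreal (\<Sum>i<m. cmod (inner_L2 (conf k) (es i) (apply_kernel (conf k) K (fs i))))
      | m es fs. (\<forall>i<m. es i \<in> L2sym k \<and> fs i \<in> L2sym k)
          \<and> orthonormal_fam (conf k) m es \<and> orthonormal_fam (conf k) m fs}"

end

theory Submission
  imports Defs
begin

text \<open>In the orthonormal basis of tensor products of words in \<open>\<phi>1\<close>, \<open>\<phi>2\<close>, both N-body
  kernels are block diagonal in the number j of factors \<open>\<phi>1\<close>, and so are their k-body marginals.
  For the symmetrised state the weight of a k-letter word with j letters \<open>\<phi>1\<close> is the
  hypergeometric probability C(N-k, N1-j) / C(N, N1); averaging over the two phases removes all
  off-diagonal terms of the product state and leaves the binomial weight (N1/N)^j (N2/N)^(k-j).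
  The two weights differ by at most 2k(k-1)/N, and by Bessel's inequality the trace norm of a
  kernel with 4^k coefficients in an orthonormal family is at most the sum of their moduli.\<close>

lemma borel_measurable_cnj [measurable (raw)]:
  fixes f :: "'a \<Rightarrow> complex"
  assumes "f \<in> borel_measurable M"
  shows "(\<lambda>x. cnj (f x)) \<in> borel_measurable M"
  by (rule borel_measurable_continuous_on[OF _ assms]) (intro continuous_intros)

lemma integrable_cnj_mult_L2:
  fixes f g :: "'a \<Rightarrow> complex"
  assumes "f \<in> L2 M" "g \<in> L2 M"
  shows "integrable M (\<lambda>x. cnj (f x) * g x)"
proof (rule Bochner_Integration.integrable_bound)
  show "integrable M (\<lambda>x. (cmod (f x))^2 + (cmod (g x))^2)"
    using assms by (auto simp: L2_def)
  show "(\<lambda>x. cnj (f x) * g x) \<in> borel_measurable M"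
    using assms by (auto simp: L2_def)
  have "cmod (f x) * cmod (g x) \<le> (cmod (f x))^2 + (cmod (g x))^2" for x
    by (smt (verit) norm_ge_zero power2_eq_square mult_mono sum_squares_bound)
  then show "AE x in M. norm (cnj (f x) * g x) \<le> norm ((cmod (f x))^2 + (cmod (g x))^2)"
    by (simp add: norm_mult)
qed

lemma inner_L2_commute: "inner_L2 M g f = cnj (inner_L2 M f g)"
  unfolding inner_L2_def
  using Bochner_Integration.integral_cnj[of M "\<lambda>x. cnj (f x) * g x"] by (simp add: mult.commute)

lemma integral_sum_sum:
  fixes f :: "'i \<Rightarrow> 'j \<Rightarrow> 'a \<Rightarrow> complex"
  assumes "finite A" "finite B" "\<And>i j. i \<in> A \<Longrightarrow> j \<in> B \<Longrightarrow> integrable M (f i j)"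
  shows "integral\<^sup>L M (\<lambda>z. \<Sum>i\<in>A. \<Sum>j\<in>B. f i j z) = (\<Sum>i\<in>A. \<Sum>j\<in>B. integral\<^sup>L M (f i j))"
  using assms
  by (simp add: Bochner_Integration.integral_sum Bochner_Integration.integrable_sum)

lemma (in comm_monoid_set) lessThan_add:
  fixes k m :: nat
  shows "F g {..<k + m} = F g {..<k} \<^bold>* F (\<lambda>i. g (k + i)) {..<m}"
proof -
  have "F g {..<k + m} = F g {0..<k} \<^bold>* F g {k..<k + m}"
    by (simp add: atLeastLessThan_concat lessThan_atLeast0)
  also have "F g {k..<k + m} = F (\<lambda>i. g (k + i)) {..<m}"
    using atLeastLessThan_shift_bounds[of g 0 k m] by (simp add: lessThan_atLeast0 comp_def add.commute)
  finally show ?thesis by (simp add: lessThan_atLeast0)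
qed

interpretation lborel_product: product_sigma_finite "\<lambda>_::nat. (lborel :: (real^3) measure)"
  by unfold_locales

lemma integrable_conf_prod:
  fixes f :: "nat \<Rightarrow> real^3 \<Rightarrow> 'b::{real_normed_field,banach,second_countable_topology}"
  assumes "\<And>i. i < n \<Longrightarrow> integrable lborel (f i)"
  shows "integrable (conf n) (\<lambda>x. \<Prod>i<n. f i (x i))"
  unfolding conf_def by (rule lborel_product.product_integrable_prod) (use assms in auto)

lemma integral_conf_prod:
  fixes f :: "nat \<Rightarrow> real^3 \<Rightarrow> 'b::{real_normed_field,banach,second_countable_topology}"
  assumes "\<And>i. i < n \<Longrightarrow> integrable lborel (f i)"
  shows "integral\<^sup>L (conf n) (\<lambda>x. \<Prod>i<n. f i (x i)) = (\<Prod>i<n. integral\<^sup>L lborel (f i))"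
  unfolding conf_def by (rule lborel_product.product_integral_prod) (use assms in auto)

definition seq_append :: "nat \<Rightarrow> nat \<Rightarrow> (nat \<Rightarrow> 'a) \<Rightarrow> (nat \<Rightarrow> 'a) \<Rightarrow> nat \<Rightarrow> 'a" where
  "seq_append k m h t = (\<lambda>i. if i < k then h i else if i < k + m then t (i - k) else undefined)"

lemma join_eq_seq_append: "join k m = seq_append k m"
  unfolding join_def seq_append_def by (intro ext) simp

lemma tensor_seq_append:
  "tensor (seq_append k m h t) (k + m) (seq_append k m x z) = tensor h k x * tensor t m z"
  unfolding tensor_def prod.lessThan_add by (simp add: seq_append_def)

section \<open>Tensor products of words in two orthonormal functions\<close>

locale orthonormal_pair =
  fixes a b :: "real^3 \<Rightarrow> complex"
  assumes L2_a: "a \<in> L2 lborel" and L2_b: "b \<in> L2 lborel"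
    and inner_a_a: "inner_L2 lborel a a = 1" and inner_b_b: "inner_L2 lborel b b = 1"
    and inner_a_b: "inner_L2 lborel a b = 0"
begin

lemma a_neq_b: "a \<noteq> b"
  using inner_a_a inner_a_b by auto

lemma L2_pair: "u \<in> {a, b} \<Longrightarrow> u \<in> L2 lborel"
  using L2_a L2_b by auto

lemma integrable_pair_mult_cnj:
  "u \<in> {a, b} \<Longrightarrow> v \<in> {a, b} \<Longrightarrow> integrable lborel (\<lambda>x. u x * cnj (v x))"
  using integrable_cnj_mult_L2[OF L2_pair L2_pair, of v u] by (simp add: mult.commute)

lemma integral_pair_mult_cnj:
  "u \<in> {a, b} \<Longrightarrow> v \<in> {a, b} \<Longrightarrow>
   integral\<^sup>L lborel (\<lambda>x. u x * cnj (v x)) = (if u = v then 1 else 0)"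
  using inner_a_a inner_b_b inner_a_b inner_L2_commute[of lborel a b]
  by (auto simp: inner_L2_def mult.commute)

definition words :: "nat \<Rightarrow> (nat \<Rightarrow> real^3 \<Rightarrow> complex) set" where
  "words n = {..<n} \<rightarrow>\<^sub>E {a, b}"

lemma finite_words [simp]: "finite (words n)"
  unfolding words_def by (intro finite_PiE) auto

lemma words_in_pair: "g \<in> words n \<Longrightarrow> i < n \<Longrightarrow> g i \<in> {a, b}"
  unfolding words_def by auto

lemma words_undefined: "g \<in> words n \<Longrightarrow> \<not> i < n \<Longrightarrow> g i = undefined"
  unfolding words_def by (metis PiE_arb lessThan_iff)

lemma in_wordsI:
  "(\<And>i. i < n \<Longrightarrow> g i \<in> {a, b}) \<Longrightarrow> (\<And>i. \<not> i < n \<Longrightarrow> g i = undefined) \<Longrightarrow> g \<in> words n"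
  unfolding words_def by (rule PiE_I) auto

lemma card_words: "card (words n) = 2 ^ n"
  unfolding words_def using a_neq_b by (simp add: card_PiE numeral_2_eq_2)

lemma tensor_words_mult_cnj:
  assumes "g \<in> words n" "g' \<in> words n"
  shows integrable_tensor_mult_cnj: "integrable (conf n) (\<lambda>z. tensor g n z * cnj (tensor g' n z))"
    and integral_tensor_mult_cnj:
      "integral\<^sup>L (conf n) (\<lambda>z. tensor g n z * cnj (tensor g' n z)) = (if g = g' then 1 else 0)"
proof -
  have eq: "(\<lambda>z. tensor g n z * cnj (tensor g' n z)) = (\<lambda>z. \<Prod>i<n. g i (z i) * cnj (g' i (z i)))"
    by (auto simp: tensor_def prod.distrib)
  have int: "integrable lborel (\<lambda>x. g i x * cnj (g' i x))" if "i < n" for i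
    using integrable_pair_mult_cnj words_in_pair assms that by blast
  show "integrable (conf n) (\<lambda>z. tensor g n z * cnj (tensor g' n z))"
    unfolding eq by (rule integrable_conf_prod[OF int])
  have "integral\<^sup>L (conf n) (\<lambda>z. tensor g n z * cnj (tensor g' n z))
      = (\<Prod>i<n. integral\<^sup>L lborel (\<lambda>x. g i x * cnj (g' i x)))"
    unfolding eq by (rule integral_conf_prod) (rule int)
  also have "\<dots> = (\<Prod>i<n. if g i = g' i then 1 else 0)"
    using integral_pair_mult_cnj words_in_pair assms by (intro prod.cong) auto
  also have "\<dots> = (if g = g' then 1 else 0)"
    using assms unfolding words_def by (auto dest: PiE_ext)
  finally show "integral\<^sup>L (conf n) (\<lambda>z. tensor g n z * cnj (tensor g' n z)) = (if g = g' then 1 else 0)" .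
qed

lemma inner_L2_tensor:
  "g \<in> words n \<Longrightarrow> g' \<in> words n \<Longrightarrow>
   inner_L2 (conf n) (tensor g n) (tensor g' n) = (if g = g' then 1 else 0)"
  using integral_tensor_mult_cnj[of g' n g] by (auto simp: inner_L2_def mult.commute)

lemma tensor_in_L2:
  assumes "g \<in> words n"
  shows "tensor g n \<in> L2 (conf n)"
proof -
  have "tensor g n \<in> borel_measurable (conf n)"
    unfolding tensor_def conf_def
    using words_in_pair[OF assms] L2_pair
    by (intro borel_measurable_prod measurable_compose[OF measurable_component_singleton])
      (auto simp: L2_def)
  moreover have "integrable (conf n) (\<lambda>z. Re (tensor g n z * cnj (tensor g n z)))"
    using integrable_tensor_mult_cnj[OF assms assms] by (rule integrable_Re)
  ultimately show ?thesis
    unfolding L2_def by (simp flip: complex_norm_square)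
qed

definition num_a :: "nat \<Rightarrow> (nat \<Rightarrow> real^3 \<Rightarrow> complex) \<Rightarrow> nat" where
  "num_a n g = card {i. i < n \<and> g i = a}"

lemma num_a_eq_sum: "num_a n g = (\<Sum>i<n. if g i = a then 1 else 0)"
  unfolding num_a_def by (simp add: sum.If_cases Int_def conj_commute)

lemma num_a_le: "num_a n g \<le> n"
proof -
  have "num_a n g \<le> card {..<n}"
    unfolding num_a_def by (intro card_mono) auto
  then show ?thesis by simp
qed

lemma num_a_seq_append: "num_a (k + m) (seq_append k m h t) = num_a k h + num_a m t"
  unfolding num_a_eq_sum sum.lessThan_add by (simp add: seq_append_def)

lemma prod_words_num_a:
  "(\<Prod>i<n. if g i = a then \<alpha> else \<beta>) = \<alpha> ^ num_a n g * \<beta> ^ (n - num_a n g)"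
proof -
  have "{i \<in> {..<n}. g i \<noteq> a} = {..<n} - {i. i < n \<and> g i = a}" by auto
  then have "card {i \<in> {..<n}. g i \<noteq> a} = n - num_a n g"
    unfolding num_a_def by (simp add: card_Diff_subset subset_eq)
  then show ?thesis
    by (simp add: prod.If_cases num_a_def Int_def conj_commute Collect_neg_eq[symmetric])
qed

lemma seq_append_in_words:
  assumes "h \<in> words k" "t \<in> words m"
  shows "seq_append k m h t \<in> words (k + m)"
proof (rule in_wordsI)
  show "seq_append k m h t i \<in> {a, b}" if "i < k + m" for i
    using that words_in_pair[OF assms(1), of i] words_in_pair[OF assms(2), of "i - k"]
    by (simp add: seq_append_def)
qed (simp add: seq_append_def)

lemma bij_betw_seq_append:
  "bij_betw (\<lambda>(h, t). seq_append k m h t) (words k \<times> words m) (words (k + m))"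
proof (rule bij_betwI[where g = "\<lambda>g. (restrict g {..<k}, restrict (\<lambda>i. g (k + i)) {..<m})"])
  show "(\<lambda>(h, t). seq_append k m h t) \<in> words k \<times> words m \<rightarrow> words (k + m)"
    using seq_append_in_words by auto
  show "(\<lambda>g. (restrict g {..<k}, restrict (\<lambda>i. g (k + i)) {..<m})) \<in> words (k + m) \<rightarrow> words k \<times> words m"
  proof (intro funcsetI mem_Sigma_iff[THEN iffD2] conjI in_wordsI)
    fix g i assume g: "g \<in> words (k + m)"
    show "i < k \<Longrightarrow> restrict g {..<k} i \<in> {a, b}"
      and "i < m \<Longrightarrow> restrict (\<lambda>i. g (k + i)) {..<m} i \<in> {a, b}"
      using words_in_pair[OF g] by simp_all
  qed simp_all
  show "(restrict ((\<lambda>(h, t). seq_append k m h t) p) {..<k},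
         restrict (\<lambda>i. ((\<lambda>(h, t). seq_append k m h t) p) (k + i)) {..<m}) = p"
    if p: "p \<in> words k \<times> words m" for p
  proof -
    obtain h t where "p = (h, t)" and "h \<in> words k" "t \<in> words m"
      using p by blast
    then show ?thesis
      using words_undefined[of h k] words_undefined[of t m] by (auto simp: seq_append_def fun_eq_iff)
  qed
  show "(\<lambda>(h, t). seq_append k m h t) (restrict g {..<k}, restrict (\<lambda>i. g (k + i)) {..<m}) = g"
    if "g \<in> words (k + m)" for g
    using that words_undefined[of g "k + m"] by (auto simp: seq_append_def fun_eq_iff)
qed

lemma sum_words_add:
  "(\<Sum>g\<in>words (k + m). F g) = (\<Sum>h\<in>words k. \<Sum>t\<in>words m. F (seq_append k m h t))"
  unfolding sum.reindex_bij_betw[OF bij_betw_seq_append, symmetric] sum.cartesian_product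
  by (simp add: case_prod_beta)

lemma card_words_num_a: "card {t \<in> words m. num_a m t = r} = m choose r"
proof -
  have "bij_betw (\<lambda>t. {i. i < m \<and> t i = a}) {t \<in> words m. num_a m t = r} {B. B \<subseteq> {..<m} \<and> card B = r}"
  proof (rule bij_betwI[where g = "\<lambda>B. restrict (\<lambda>i. if i \<in> B then a else b) {..<m}"])
    show "(\<lambda>t. {i. i < m \<and> t i = a}) \<in> {t \<in> words m. num_a m t = r} \<rightarrow> {B. B \<subseteq> {..<m} \<and> card B = r}"
      by (auto simp: num_a_def)
    show "(\<lambda>B. restrict (\<lambda>i. if i \<in> B then a else b) {..<m})
        \<in> {B. B \<subseteq> {..<m} \<and> card B = r} \<rightarrow> {t \<in> words m. num_a m t = r}"
    proof
      fix B assume B: "B \<in> {B. B \<subseteq> {..<m} \<and> card B = r}"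
      then have "{i. i < m \<and> restrict (\<lambda>i. if i \<in> B then a else b) {..<m} i = a} = B"
        using a_neq_b by auto
      then show "restrict (\<lambda>i. if i \<in> B then a else b) {..<m} \<in> {t \<in> words m. num_a m t = r}"
        using B by (auto simp: num_a_def intro!: in_wordsI)
    qed
    show "restrict (\<lambda>i. if i \<in> {i. i < m \<and> t i = a} then a else b) {..<m} = t"
      if t: "t \<in> {t \<in> words m. num_a m t = r}" for t
      using t words_in_pair[of t m] words_undefined[of t m] by (intro ext) auto
    show "{i. i < m \<and> restrict (\<lambda>i. if i \<in> B then a else b) {..<m} i = a} = B"
      if "B \<in> {B. B \<subseteq> {..<m} \<and> card B = r}" for B
      using that a_neq_b by auto
  qed
  then have "card {t \<in> words m. num_a m t = r} = card {B. B \<subseteq> {..<m} \<and> card B = r}"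
    by (rule bij_betw_same_card)
  then show ?thesis by (simp add: n_subsets)
qed

lemma sum_words_num_a:
  "(\<Sum>t\<in>words n. F (num_a n t)) = (\<Sum>r\<le>n. of_nat (n choose r) * F r)"
proof -
  have "(\<Sum>t\<in>words n. F (num_a n t)) = (\<Sum>r\<le>n. \<Sum>t\<in>{t \<in> words n. num_a n t = r}. F (num_a n t))"
    by (rule sum.group[symmetric]) (auto simp: num_a_le)
  also have "\<dots> = (\<Sum>r\<le>n. \<Sum>t\<in>{t \<in> words n. num_a n t = r}. F r)"
    by (intro sum.cong) auto
  also have "\<dots> = (\<Sum>r\<le>n. of_nat (n choose r) * F r)"
    by (simp add: card_words_num_a)
  finally show ?thesis .
qed

lemma prod_pair_expand:
  "(\<Prod>i<n. \<alpha> * a (x i) + \<beta> * b (x i))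
   = (\<Sum>g\<in>words n. \<alpha> ^ num_a n g * \<beta> ^ (n - num_a n g) * tensor g n x)"
proof -
  have "(\<Prod>i<n. \<alpha> * a (x i) + \<beta> * b (x i))
      = (\<Prod>i<n. \<Sum>u\<in>{a, b}. (if u = a then \<alpha> else \<beta>) * u (x i))"
    using a_neq_b by simp
  also have "\<dots> = (\<Sum>g\<in>words n. \<Prod>i<n. (if g i = a then \<alpha> else \<beta>) * g i (x i))"
    unfolding words_def by (rule prod_sum_PiE) auto
  also have "\<dots> = (\<Sum>g\<in>words n. \<alpha> ^ num_a n g * \<beta> ^ (n - num_a n g) * tensor g n x)"
    by (simp add: prod.distrib prod_words_num_a tensor_def)
  finally show ?thesis .
qed

lemma marginal_tensor_expansion:
  assumes "k \<le> N"
  shows "marginal N k (\<lambda>x y. \<Sum>g\<in>words N. \<Sum>g'\<in>words N. c g g' * (tensor g N x * cnj (tensor g' N y))) x y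
    = (\<Sum>h\<in>words k. \<Sum>h'\<in>words k.
        (\<Sum>t\<in>words (N - k). c (seq_append k (N - k) h t) (seq_append k (N - k) h' t))
          * (tensor h k x * cnj (tensor h' k y)))"
proof -
  define n where "n = N - k"
  have N: "N = k + n" using assms by (simp add: n_def)
  define X where "X h h' = tensor h k x * cnj (tensor h' k y)" for h h'
  define C where "C h t h' t' = c (seq_append k n h t) (seq_append k n h' t')" for h t h' t'
  have "marginal N k (\<lambda>x y. \<Sum>g\<in>words N. \<Sum>g'\<in>words N. c g g' * (tensor g N x * cnj (tensor g' N y))) x y
     = integral\<^sup>L (conf n) (\<lambda>z. \<Sum>h\<in>words k. \<Sum>t\<in>words n. \<Sum>h'\<in>words k. \<Sum>t'\<in>words n.
          C h t h' t' * X h h' * (tensor t n z * cnj (tensor t' n z)))"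
    unfolding marginal_def join_eq_seq_append n_def[symmetric]
    unfolding N sum_words_add tensor_seq_append C_def X_def by (simp add: mult_ac)
  also have "\<dots> = (\<Sum>h\<in>words k. \<Sum>t\<in>words n. \<Sum>h'\<in>words k. \<Sum>t'\<in>words n.
          C h t h' t' * X h h' * (if t = t' then 1 else 0))"
    by (simp add: integral_sum integrable_sum integrable_tensor_mult_cnj integral_tensor_mult_cnj)
  also have "\<dots> = (\<Sum>h\<in>words k. \<Sum>h'\<in>words k. (\<Sum>t\<in>words n. C h t h' t) * X h h')"
    by (simp add: if_distrib[of "\<lambda>u. _ * u"] sum.delta sum.swap[of _ "words n"] sum_distrib_right
        cong: if_cong)
  finally show ?thesis by (simp add: C_def X_def n_def)
qed

text \<open>Both N-body kernels of the theorem, and their marginals, are of this form.\<close>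

definition sector_kernel :: "nat \<Rightarrow> (nat \<Rightarrow> complex) \<Rightarrow> cfg \<Rightarrow> cfg \<Rightarrow> complex" where
  "sector_kernel n w x y = (\<Sum>g\<in>words n. \<Sum>g'\<in>words n.
     (if num_a n g = num_a n g' then w (num_a n g) else 0) * (tensor g n x * cnj (tensor g' n y)))"

lemma sector_kernel_cong:
  "(\<And>j. j \<le> n \<Longrightarrow> w j = w' j) \<Longrightarrow> sector_kernel n w = sector_kernel n w'"
  unfolding sector_kernel_def by (intro ext sum.cong refl) (simp add: num_a_le)

lemma sector_kernel_diff:
  "sector_kernel n w x y - sector_kernel n w' x y = sector_kernel n (\<lambda>j. w j - w' j) x y"
  unfolding sector_kernel_def sum_subtractf[symmetric] by (intro sum.cong refl) (simp add: algebra_simps)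

lemma marginal_sector_kernel:
  assumes "k \<le> N"
  shows "marginal N k (sector_kernel N w)
    = sector_kernel k (\<lambda>j. \<Sum>r\<le>N - k. of_nat (N - k choose r) * w (j + r))"
proof (intro ext)
  fix x y
  define n where "n = N - k"
  have N: "N = k + n" using assms by (simp add: n_def)
  have "(\<Sum>t\<in>words n. if num_a N (seq_append k n h t) = num_a N (seq_append k n h' t)
           then w (num_a N (seq_append k n h t)) else 0)
     = (if num_a k h = num_a k h' then \<Sum>r\<le>n. of_nat (n choose r) * w (num_a k h + r) else 0)" for h h'
  proof (cases "num_a k h = num_a k h'")
    case True
    then show ?thesis
      unfolding N num_a_seq_append using sum_words_num_a[of "\<lambda>r. w (num_a k h + r)" n] by simp
  qed (simp add: N num_a_seq_append)
  then show "marginal N k (sector_kernel N w) x y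
    = sector_kernel k (\<lambda>j. \<Sum>r\<le>N - k. of_nat (N - k choose r) * w (j + r)) x y"
    unfolding sector_kernel_def[abs_def] marginal_tensor_expansion[OF assms] n_def[symmetric]
    by (simp add: if_distrib[of "\<lambda>u. u * _"] cong: if_cong)
qed

end

section \<open>The symmetrised state\<close>

lemma permutes_of_equal_fibres:
  assumes "finite A" and "\<And>u. card {i \<in> A. f i = u} = card {i \<in> A. f' i = u}"
  obtains p where "p permutes A" and "\<forall>i\<in>A. f i = f' (p i)"
proof -
  have count: "count (image_mset h (mset_set A)) u = card {i \<in> A. h i = u}" for h :: "'a \<Rightarrow> 'b" and u
    using assms(1) by (simp add: count_image_mset vimage_def Int_def conj_commute)
  have "image_mset f (mset_set A) = image_mset f' (mset_set A)"
    by (rule multiset_eqI) (simp add: count assms(2))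
  with image_mset_eq_implies_permutes[OF assms(1)] that show thesis by blast
qed

context orthonormal_pair
begin

lemma num_a_arrangement:
  assumes "\<sigma> permutes {..<N}" "N1 \<le> N"
  shows "num_a N (\<lambda>i. if i < N then if \<sigma> i < N1 then a else b else undefined) = N1"
proof -
  have "num_a N (\<lambda>i. if i < N then if \<sigma> i < N1 then a else b else undefined)
      = (\<Sum>i<N. if \<sigma> i < N1 then 1 else 0)"
    unfolding num_a_eq_sum using a_neq_b by (intro sum.cong) auto
  also have "\<dots> = (\<Sum>i<N. if i < N1 then 1 else 0)"
    by (rule sum.permute[OF assms(1), of "\<lambda>i. if i < N1 then 1 else 0", unfolded comp_def, symmetric])
  also have "\<dots> = N1"
  proof -
    have "{..<N} \<inter> {i. i < N1} = {..<N1}"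
      using assms by auto
    then show ?thesis
      by (simp add: sum.If_cases)
  qed
  finally show ?thesis .
qed

lemma card_letter_positions_eq:
  assumes g: "g \<in> words N" "num_a N g = N1" and "N1 \<le> N"
  shows "card {i \<in> {..<N}. g i = u} = card {i \<in> {..<N}. (if i < N1 then a else b) = u}"
proof -
  have g_pair: "g i = a \<or> g i = b" if "i < N" for i
    using words_in_pair[OF g(1) that] by simp
  consider "u = a" | "u = b" | "u \<notin> {a, b}"
    by blast
  then show ?thesis
  proof cases
    case 1
    then have "{i \<in> {..<N}. (if i < N1 then a else b) = u} = {..<N1}"
      using assms a_neq_b by auto
    then show ?thesis
      using g 1 by (simp add: num_a_def)
  next
    case 2
    then have "{i \<in> {..<N}. g i = u} = {..<N} - {i. i < N \<and> g i = a}"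
      using g_pair a_neq_b by auto
    moreover have "{i \<in> {..<N}. (if i < N1 then a else b) = u} = {N1..<N}"
      using 2 a_neq_b by auto
    ultimately show ?thesis
      using g by (simp add: card_Diff_subset subset_eq num_a_def)
  next
    case 3
    then have "{i \<in> {..<N}. g i = u} = {}" and "{i \<in> {..<N}. (if i < N1 then a else b) = u} = {}"
      using g_pair by auto
    then show ?thesis
      by (simp only: card.empty)
  qed
qed

lemma arrangements_pair:
  assumes "N1 \<le> N"
  shows "arrangements (\<lambda>i. if i < N1 then a else b) N = {g \<in> words N. num_a N g = N1}"
proof (intro set_eqI iffI)
  fix g assume "g \<in> arrangements (\<lambda>i. if i < N1 then a else b) N"
  then obtain \<sigma> where \<sigma>: "\<sigma> permutes {..<N}"
    and g: "g = (\<lambda>i. if i < N then if \<sigma> i < N1 then a else b else undefined)"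
    unfolding arrangements_def by auto
  have "g \<in> words N"
    unfolding g by (intro in_wordsI) auto
  then show "g \<in> {g \<in> words N. num_a N g = N1}"
    using num_a_arrangement[OF \<sigma> assms] g by simp
next
  fix g assume g: "g \<in> {g \<in> words N. num_a N g = N1}"
  then have "card {i \<in> {..<N}. g i = u} = card {i \<in> {..<N}. (if i < N1 then a else b) = u}" for u
    using card_letter_positions_eq assms by simp
  then obtain \<sigma> where \<sigma>: "\<sigma> permutes {..<N}" and "\<forall>i\<in>{..<N}. g i = (if \<sigma> i < N1 then a else b)"
    by (rule permutes_of_equal_fibres[OF finite_lessThan])
  moreover have "g i = undefined" if "\<not> i < N" for i
    using g that words_undefined by blast
  ultimately have "g = (\<lambda>i. if i < N then if \<sigma> i < N1 then a else b else undefined)"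
    by (intro ext) auto
  then show "g \<in> arrangements (\<lambda>i. if i < N1 then a else b) N"
    unfolding arrangements_def using \<sigma> by blast
qed

lemma integral_cmod_sum_tensor_square:
  assumes "S \<subseteq> words n"
  shows "integral\<^sup>L (conf n) (\<lambda>z. (cmod (\<Sum>g\<in>S. tensor g n z))^2) = card S"
proof -
  have fin: "finite S"
    using finite_subset[OF assms finite_words] .
  have int: "integrable (conf n) (\<lambda>z. tensor g n z * cnj (tensor g' n z))" if "g \<in> S" "g' \<in> S" for g g'
    using assms that by (intro integrable_tensor_mult_cnj) auto
  have sq: "(cmod (\<Sum>g\<in>S. tensor g n z))^2 = Re (\<Sum>g\<in>S. \<Sum>g'\<in>S. tensor g n z * cnj (tensor g' n z))" for z
  proof -
    have "(cmod (\<Sum>g\<in>S. tensor g n z))^2 = Re ((\<Sum>g\<in>S. tensor g n z) * cnj (\<Sum>g\<in>S. tensor g n z))"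
      by (metis Re_complex_of_real complex_norm_square)
    then show ?thesis
      by (simp only: cnj_sum sum_product)
  qed
  have "integral\<^sup>L (conf n) (\<lambda>z. (cmod (\<Sum>g\<in>S. tensor g n z))^2)
      = Re (integral\<^sup>L (conf n) (\<lambda>z. \<Sum>g\<in>S. \<Sum>g'\<in>S. tensor g n z * cnj (tensor g' n z)))"
    unfolding sq by (rule integral_Re) (intro Bochner_Integration.integrable_sum int)
  also have "integral\<^sup>L (conf n) (\<lambda>z. \<Sum>g\<in>S. \<Sum>g'\<in>S. tensor g n z * cnj (tensor g' n z))
      = (\<Sum>g\<in>S. \<Sum>g'\<in>S. if g = g' then 1 else 0)"
    using assms by (simp add: integral_sum_sum[OF fin fin int] integral_tensor_mult_cnj subset_iff)
  finally show ?thesis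
    using fin by simp
qed

lemma proj_kernel_vee2:
  "proj_kernel (vee2 a N1 b N2)
    = sector_kernel (N1 + N2) (\<lambda>j. if j = N1 then 1 / of_nat (N1 + N2 choose N1) else 0)"
proof (intro ext)
  fix x y
  let ?N = "N1 + N2"
  let ?S = "{g \<in> words ?N. num_a ?N g = N1}"
  let ?C = "?N choose N1"
  have symsum: "symsum (\<lambda>i. if i < N1 then a else b) ?N = (\<lambda>z. \<Sum>g\<in>?S. tensor g ?N z)"
    unfolding symsum_def[abs_def] arrangements_pair[OF le_add1] ..
  have "?S \<subseteq> words ?N"
    by blast
  then have norm: "norm_L2 (conf ?N) (\<lambda>z. \<Sum>g\<in>?S. tensor g ?N z) = sqrt (real ?C)"
    by (simp add: norm_L2_def integral_cmod_sum_tensor_square card_words_num_a)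
  have C: "complex_of_real (sqrt (real ?C)) * cnj (complex_of_real (sqrt (real ?C))) = of_nat ?C"
    by (simp flip: of_real_mult)
  have "proj_kernel (vee2 a N1 b N2) x y
      = (\<Sum>g\<in>?S. tensor g ?N x) * cnj (\<Sum>g\<in>?S. tensor g ?N y) / of_nat ?C"
    unfolding proj_kernel_def vee2_def symprod_def symsum norm complex_cnj_divide times_divide_times_eq C ..
  also have "\<dots> = (\<Sum>g\<in>words ?N. if num_a ?N g = N1 then \<Sum>g'\<in>words ?N.
      if num_a ?N g' = N1 then tensor g ?N x * cnj (tensor g' ?N y) / of_nat ?C else 0 else 0)"
    unfolding cnj_sum sum_product sum_divide_distrib by (simp add: sum.inter_filter)
  also have "\<dots> = sector_kernel ?N (\<lambda>j. if j = N1 then 1 / of_nat ?C else 0) x y"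
    unfolding sector_kernel_def
  proof (intro sum.cong refl)
    fix g
    show "(if num_a ?N g = N1 then \<Sum>g'\<in>words ?N.
        if num_a ?N g' = N1 then tensor g ?N x * cnj (tensor g' ?N y) / of_nat ?C else 0 else 0)
      = (\<Sum>g'\<in>words ?N. (if num_a ?N g = num_a ?N g'
          then if num_a ?N g = N1 then 1 / of_nat ?C else 0 else 0) * (tensor g ?N x * cnj (tensor g' ?N y)))"
      by (cases "num_a ?N g = N1") (auto intro!: sum.cong)
  qed
  finally show "proj_kernel (vee2 a N1 b N2) x y
    = sector_kernel ?N (\<lambda>j. if j = N1 then 1 / of_nat ?C else 0) x y" .
qed

end

section \<open>Phase averaging\<close>

definition phase :: "real \<Rightarrow> complex" where
  "phase t = exp (- \<i> * complex_of_real t)"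

lemma continuous_on_phase_power: "continuous_on S (\<lambda>t. phase t ^ j * cnj (phase t) ^ j')"
  unfolding phase_def by (intro continuous_intros)

lemma phase_power_mult_cnj_power:
  "phase t ^ j * cnj (phase t) ^ j' = exp (\<i> * of_int (int j' - int j) * complex_of_real t)"
proof -
  have "phase t ^ j = exp (of_nat j * (- \<i> * complex_of_real t))"
    unfolding phase_def by (rule exp_of_nat_mult[symmetric])
  moreover have "cnj (phase t) ^ j' = exp (of_nat j' * (\<i> * complex_of_real t))"
    unfolding phase_def exp_cnj by (subst exp_of_nat_mult) simp
  ultimately show ?thesis
    by (simp add: exp_add[symmetric] algebra_simps)
qed

lemma integral_exp_int_multiple:
  "integral {0..2*pi} (\<lambda>t. exp (\<i> * of_int m * complex_of_real t))
    = (if m = 0 then complex_of_real (2 * pi) else 0)"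
proof (cases "m = 0")
  case True
  then show ?thesis by (simp add: scaleR_conv_of_real)
next
  case False
  define c where "c = \<i> * of_int m"
  have "c \<noteq> 0"
    using False by (simp add: c_def)
  have "((\<lambda>t. exp (c * complex_of_real t)) has_integral
      (exp (c * complex_of_real (2*pi)) / c - exp (c * complex_of_real 0) / c)) {0..2*pi}"
  proof (rule fundamental_theorem_of_calculus)
    fix x :: real
    have "((\<lambda>z. exp (c * z) / c) has_field_derivative exp (c * complex_of_real x)) (at (complex_of_real x))"
      using \<open>c \<noteq> 0\<close> by (auto intro!: derivative_eq_intros)
    then show "((\<lambda>t. exp (c * complex_of_real t) / c) has_vector_derivative exp (c * complex_of_real x))
        (at x within {0..2*pi})"
      by (rule has_vector_derivative_real_field)
  qed simp
  moreover have "exp (c * complex_of_real (2*pi)) = 1"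
    using exp_integer_2pi[of "real_of_int m"] by (simp add: c_def mult_ac)
  ultimately show ?thesis
    using False by (simp add: c_def integral_unique)
qed

lemma set_integral_eq_integral_continuous:
  fixes f :: "real \<Rightarrow> complex"
  assumes "continuous_on {a..b} f"
  shows "(LINT t:{a..b}|lborel. f t) = integral {a..b} f"
proof -
  have "set_integrable lborel {a..b} f"
    unfolding set_integrable_def by (rule borel_integrable_compact) (auto intro: assms)
  then show ?thesis
    by (rule set_borel_integral_eq_integral(2))
qed

lemma set_integral_phase:
  "(LINT t:{0..2*pi}|lborel. phase t ^ j * cnj (phase t) ^ j')
    = (if j = j' then complex_of_real (2 * pi) else 0)"
  unfolding set_integral_eq_integral_continuous[OF continuous_on_phase_power]
  unfolding phase_power_mult_cnj_power integral_exp_int_multiple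
  by simp

lemma set_integral_sum_phase:
  assumes "finite I"
  shows "(LINT t:{0..2*pi}|lborel. \<Sum>i\<in>I. c i * (phase t ^ j i * cnj (phase t) ^ j' i))
    = (\<Sum>i\<in>I. if j i = j' i then c i * complex_of_real (2 * pi) else 0)"
proof -
  have "(LINT t:{0..2*pi}|lborel. \<Sum>i\<in>I. c i * (phase t ^ j i * cnj (phase t) ^ j' i))
      = integral {0..2*pi} (\<lambda>t. \<Sum>i\<in>I. c i * (phase t ^ j i * cnj (phase t) ^ j' i))"
    by (intro set_integral_eq_integral_continuous continuous_intros continuous_on_phase_power)
  also have "\<dots> = (\<Sum>i\<in>I. integral {0..2*pi} (\<lambda>t. c i * (phase t ^ j i * cnj (phase t) ^ j' i)))"
    using assms by (intro Henstock_Kurzweil_Integration.integral_sum integrable_continuous_interval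
        continuous_intros continuous_on_phase_power)
  also have "\<dots> = (\<Sum>i\<in>I. if j i = j' i then c i * complex_of_real (2 * pi) else 0)"
    by (intro sum.cong refl)
      (simp add: set_integral_phase flip: set_integral_eq_integral_continuous[OF continuous_on_phase_power])
  finally show ?thesis .
qed

lemma phase_average:
  assumes "finite I"
  shows "complex_of_real (1 / (2 * pi)^2) * (LINT t1:{0..2*pi}|lborel. LINT t2:{0..2*pi}|lborel.
      \<Sum>i\<in>I. c i * (phase t1 ^ j i * cnj (phase t1) ^ j' i) * (phase t2 ^ l i * cnj (phase t2) ^ l' i))
    = (\<Sum>i\<in>I. if j i = j' i \<and> l i = l' i then c i else 0)"
proof -
  define \<tau> where "\<tau> = complex_of_real (2 * pi)"
  define \<nu> where "\<nu> = complex_of_real (1 / (2 * pi)^2)"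
  let ?c' = "\<lambda>i. if l i = l' i then c i * \<tau> else 0"
  have "(LINT t2:{0..2*pi}|lborel.
      \<Sum>i\<in>I. c i * (phase t1 ^ j i * cnj (phase t1) ^ j' i) * (phase t2 ^ l i * cnj (phase t2) ^ l' i))
    = (\<Sum>i\<in>I. ?c' i * (phase t1 ^ j i * cnj (phase t1) ^ j' i))" for t1
    unfolding set_integral_sum_phase[OF assms] \<tau>_def by (intro sum.cong refl) simp
  then have outer: "(LINT t1:{0..2*pi}|lborel. LINT t2:{0..2*pi}|lborel.
      \<Sum>i\<in>I. c i * (phase t1 ^ j i * cnj (phase t1) ^ j' i) * (phase t2 ^ l i * cnj (phase t2) ^ l' i))
    = (\<Sum>i\<in>I. if j i = j' i then ?c' i * \<tau> else 0)"
    by (simp only: set_integral_sum_phase[OF assms] \<tau>_def)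
  have key: "\<nu> * (c0 * \<tau> * \<tau>) = c0" for c0
  proof -
    have "\<nu> * \<tau> * \<tau> = 1"
      by (simp add: \<nu>_def \<tau>_def power2_eq_square flip: of_real_mult)
    then show ?thesis
      by (simp add: ac_simps)
  qed
  show ?thesis
    unfolding \<nu>_def[symmetric] outer sum_distrib_left by (intro sum.cong refl) (simp add: key)
qed

context orthonormal_pair
begin

lemma mixed_kernel_eq_sector_kernel:
  "mixed_kernel a N1 b N2 N
    = sector_kernel N (\<lambda>j. complex_of_real ((real N1 / real N) ^ j * (real N2 / real N) ^ (N - j)))"
proof (intro ext)
  fix x y
  define sp where "sp = complex_of_real (sqrt (real N1 / real N))"
  define sq where "sq = complex_of_real (sqrt (real N2 / real N))"
  define c where "c g g' = sp ^ num_a N g * sp ^ num_a N g' * sq ^ (N - num_a N g) * sq ^ (N - num_a N g')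
    * (tensor g N x * cnj (tensor g' N y))" for g g'
  have psi: "psi_theta a N1 b N2 N t1 t2 = (\<lambda>z. (sp * phase t1) * a z + (sq * phase t2) * b z)" for t1 t2
    by (simp add: psi_theta_def sp_def sq_def phase_def fun_eq_iff)
  have "proj_kernel (tensor (\<lambda>_. psi_theta a N1 b N2 N t1 t2) N) x y
    = (\<Sum>p\<in>words N \<times> words N. c (fst p) (snd p)
        * (phase t1 ^ num_a N (fst p) * cnj (phase t1) ^ num_a N (snd p))
        * (phase t2 ^ (N - num_a N (fst p)) * cnj (phase t2) ^ (N - num_a N (snd p))))" for t1 t2
    unfolding proj_kernel_def tensor_def psi
    unfolding prod_pair_expand cnj_sum sum_product sum.cartesian_product'
    by (intro sum.cong refl) (simp add: c_def sp_def sq_def power_mult_distrib case_prod_beta mult_ac)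
  note expand = this
  have "mixed_kernel a N1 b N2 N x y = (\<Sum>p\<in>words N \<times> words N.
      if num_a N (fst p) = num_a N (snd p) \<and> N - num_a N (fst p) = N - num_a N (snd p)
      then c (fst p) (snd p) else 0)"
    unfolding mixed_kernel_def expand by (rule phase_average) simp
  also have "\<dots> = (\<Sum>g\<in>words N. \<Sum>g'\<in>words N.
      if num_a N g = num_a N g' \<and> N - num_a N g = N - num_a N g' then c g g' else 0)"
    unfolding sum.cartesian_product' fst_conv snd_conv ..
  also have "\<dots> = sector_kernel N
      (\<lambda>j. complex_of_real ((real N1 / real N) ^ j * (real N2 / real N) ^ (N - j))) x y"
    unfolding sector_kernel_def
  proof (intro sum.cong refl)
    fix g g'
    have "sp * sp = complex_of_real (real N1 / real N)" "sq * sq = complex_of_real (real N2 / real N)"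
      by (simp_all add: sp_def sq_def flip: of_real_mult)
    then have "(sp * sp) ^ j * (sq * sq) ^ (N - j)
        = complex_of_real ((real N1 / real N) ^ j * (real N2 / real N) ^ (N - j))" for j
      by simp
    then have "sp ^ j * sp ^ j * sq ^ (N - j) * sq ^ (N - j)
        = complex_of_real ((real N1 / real N) ^ j * (real N2 / real N) ^ (N - j))" for j
      by (simp add: power_mult_distrib ac_simps)
    then show "(if num_a N g = num_a N g' \<and> N - num_a N g = N - num_a N g' then c g g' else 0)
      = (if num_a N g = num_a N g' then complex_of_real ((real N1 / real N) ^ num_a N g
          * (real N2 / real N) ^ (N - num_a N g)) else 0) * (tensor g N x * cnj (tensor g' N y))"
      by (cases "num_a N g = num_a N g'") (simp_all add: c_def)
  qed
  finally show "mixed_kernel a N1 b N2 N x y = sector_kernel N (\<lambda>j. complex_of_real ((real N1 / real N) ^ j * (real N2 / real N) ^ (N - j))) x y" .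
qed

end

section \<open>Trace norm of finite-rank kernels\<close>

lemma mult_cnj_self_eq:
  "z * cnj z = (complex_of_real (cmod z))^2" "cnj z * z = (complex_of_real (cmod z))^2"
  by (metis complex_norm_square of_real_power, metis complex_norm_square of_real_power mult.commute)

lemma bessel_inequality_L2:
  fixes u :: "'a \<Rightarrow> complex"
  assumes u: "u \<in> L2 M" and e: "\<And>i. i < m \<Longrightarrow> e i \<in> L2 M" and orth: "orthonormal_fam M m e"
  shows "(\<Sum>i<m. (cmod (inner_L2 M (e i) u))^2) \<le> Re (inner_L2 M u u)"
proof -
  define c where "c i = inner_L2 M (e i) u" for i
  define v where "v x = u x - (\<Sum>i<m. c i * e i x)" for x
  have "integrable M (\<lambda>x. cnj (u x) * u x)"
    and "\<And>j. j < m \<Longrightarrow> integrable M (\<lambda>x. cnj (u x) * e j x)"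
    and "\<And>i. i < m \<Longrightarrow> integrable M (\<lambda>x. cnj (e i x) * u x)"
    and "\<And>i j. i < m \<Longrightarrow> j < m \<Longrightarrow> integrable M (\<lambda>x. cnj (e i x) * e j x)"
    using u e by (auto intro: integrable_cnj_mult_L2)
  note int = this
  have pw: "cnj (v x) * v x = cnj (u x) * u x - (\<Sum>j<m. c j * (cnj (u x) * e j x))
      - (\<Sum>i<m. cnj (c i) * (cnj (e i x) * u x)) + (\<Sum>i<m. \<Sum>j<m. (cnj (c i) * c j) * (cnj (e i x) * e j x))"
    for x
    unfolding v_def by (simp add: cnj_sum algebra_simps sum_distrib_left sum_distrib_right sum_subtractf)
  have "integral\<^sup>L M (\<lambda>x. cnj (v x) * v x) = inner_L2 M u u - (\<Sum>j<m. c j * inner_L2 M u (e j))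
      - (\<Sum>i<m. cnj (c i) * inner_L2 M (e i) u) + (\<Sum>i<m. \<Sum>j<m. (cnj (c i) * c j) * inner_L2 M (e i) (e j))"
  proof -
    have "integrable M (\<lambda>x. \<Sum>j<m. c j * (cnj (u x) * e j x))"
      and "integrable M (\<lambda>x. \<Sum>i<m. cnj (c i) * (cnj (e i x) * u x))"
      and "integrable M (\<lambda>x. \<Sum>i<m. \<Sum>j<m. (cnj (c i) * c j) * (cnj (e i x) * e j x))"
      by (auto intro!: Bochner_Integration.integrable_sum integrable_mult_right int)
    moreover have "integral\<^sup>L M (\<lambda>x. \<Sum>i<m. \<Sum>j<m. (cnj (c i) * c j) * (cnj (e i x) * e j x))
        = (\<Sum>i<m. \<Sum>j<m. (cnj (c i) * c j) * integral\<^sup>L M (\<lambda>x. cnj (e i x) * e j x))"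
      by (subst integral_sum_sum) (auto intro!: integrable_mult_right int)
    ultimately show ?thesis
      unfolding pw inner_L2_def
      by (simp add: int Bochner_Integration.integral_add Bochner_Integration.integral_diff)
  qed
  also have "\<dots> = inner_L2 M u u - (\<Sum>i<m. complex_of_real ((cmod (c i))^2))"
  proof -
    have "(\<Sum>j<m. c j * inner_L2 M u (e j)) = (\<Sum>i<m. complex_of_real ((cmod (c i))^2))"
      "(\<Sum>i<m. cnj (c i) * inner_L2 M (e i) u) = (\<Sum>i<m. complex_of_real ((cmod (c i))^2))"
      by (simp_all add: c_def inner_L2_commute[of M u] mult.commute mult_cnj_self_eq)
    moreover have "(\<Sum>i<m. \<Sum>j<m. (cnj (c i) * c j) * inner_L2 M (e i) (e j))
        = (\<Sum>i<m. complex_of_real ((cmod (c i))^2))"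
      using orth by (simp add: orthonormal_fam_def if_distrib[of "\<lambda>z. _ * z"] mult_cnj_self_eq cong: if_cong)
    ultimately show ?thesis by simp
  qed
  finally have "integral\<^sup>L M (\<lambda>x. cnj (v x) * v x) = inner_L2 M u u - (\<Sum>i<m. complex_of_real ((cmod (c i))^2))" .
  moreover have "0 \<le> Re (integral\<^sup>L M (\<lambda>x. cnj (v x) * v x))"
    unfolding mult_cnj_self_eq(2) of_real_power[symmetric] integral_complex_of_real by simp
  ultimately show ?thesis
    by (simp add: c_def)
qed

lemma apply_kernel_finite_rank:
  assumes "finite I" and u: "\<And>i. i \<in> I \<Longrightarrow> u i \<in> L2 M" and f: "f \<in> L2 M"
    and K: "\<And>x y. K x y = (\<Sum>i\<in>I. \<Sum>i'\<in>I. D i i' * (u i x * cnj (u i' y)))"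
  shows "apply_kernel M K f x = (\<Sum>i\<in>I. \<Sum>i'\<in>I. (D i i' * inner_L2 M (u i') f) * u i x)"
proof -
  have "apply_kernel M K f x
      = integral\<^sup>L M (\<lambda>y. \<Sum>i\<in>I. \<Sum>i'\<in>I. (D i i' * u i x) * (cnj (u i' y) * f y))"
    unfolding apply_kernel_def K sum_distrib_right
    by (intro Bochner_Integration.integral_cong refl sum.cong) (simp add: mult_ac)
  also have "\<dots> = (\<Sum>i\<in>I. \<Sum>i'\<in>I. integral\<^sup>L M (\<lambda>y. (D i i' * u i x) * (cnj (u i' y) * f y)))"
    using assms by (intro integral_sum_sum) (auto intro!: integrable_mult_right integrable_cnj_mult_L2)
  also have "\<dots> = (\<Sum>i\<in>I. \<Sum>i'\<in>I. (D i i' * inner_L2 M (u i') f) * u i x)"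
    unfolding integral_mult_right_zero inner_L2_def by (simp add: mult_ac)
  finally show ?thesis .
qed

lemma inner_L2_apply_kernel_finite_rank:
  assumes "finite I" and u: "\<And>i. i \<in> I \<Longrightarrow> u i \<in> L2 M" and f: "f \<in> L2 M" and e: "e \<in> L2 M"
    and K: "\<And>x y. K x y = (\<Sum>i\<in>I. \<Sum>i'\<in>I. D i i' * (u i x * cnj (u i' y)))"
  shows "inner_L2 M e (apply_kernel M K f)
    = (\<Sum>i\<in>I. \<Sum>i'\<in>I. (D i i' * inner_L2 M (u i') f) * inner_L2 M e (u i))"
proof -
  have "inner_L2 M e (apply_kernel M K f) = integral\<^sup>L M (\<lambda>x. cnj (e x) * apply_kernel M K f x)"
    by (simp add: inner_L2_def)
  also have "\<dots> = integral\<^sup>L M (\<lambda>x. \<Sum>i\<in>I. \<Sum>i'\<in>I.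
      (D i i' * inner_L2 M (u i') f) * (cnj (e x) * u i x))"
    by (simp add: apply_kernel_finite_rank[OF assms(1-3) K] sum_distrib_left mult_ac)
  also have "\<dots> = (\<Sum>i\<in>I. \<Sum>i'\<in>I. (D i i' * inner_L2 M (u i') f) * inner_L2 M e (u i))"
    using assms
    by (subst integral_sum_sum) (auto simp: inner_L2_def intro!: integrable_mult_right integrable_cnj_mult_L2)
  finally show ?thesis .
qed

lemma sum_cmod_inner_mult_le_1:
  assumes u: "u \<in> L2 M" "Re (inner_L2 M u u) \<le> 1" and v: "v \<in> L2 M" "Re (inner_L2 M v v) \<le> 1"
    and e: "\<And>n. n < m \<Longrightarrow> e n \<in> L2 M" "orthonormal_fam M m e"
    and f: "\<And>n. n < m \<Longrightarrow> f n \<in> L2 M" "orthonormal_fam M m f"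
  shows "(\<Sum>n<m. cmod (inner_L2 M v (f n)) * cmod (inner_L2 M (e n) u)) \<le> 1"
proof -
  have "cmod (inner_L2 M v (f n)) = cmod (inner_L2 M (f n) v)" for n
    by (metis inner_L2_commute complex_mod_cnj)
  then have "(\<Sum>n<m. (cmod (inner_L2 M v (f n)))^2) \<le> 1"
    using bessel_inequality_L2[OF v(1) f] v(2) by simp
  moreover have "(\<Sum>n<m. (cmod (inner_L2 M (e n) u))^2) \<le> 1"
    using bessel_inequality_L2[OF u(1) e] u(2) by simp
  ultimately have "(\<Sum>n<m. cmod (inner_L2 M v (f n)) * cmod (inner_L2 M (e n) u))^2 \<le> 1"
    using Cauchy_Schwarz_ineq_sum[of "\<lambda>n. cmod (inner_L2 M v (f n))" "\<lambda>n. cmod (inner_L2 M (e n) u)" "{..<m}"]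
    by (smt (verit) mult_le_one sum_nonneg zero_le_power2)
  then show ?thesis
    by (simp add: abs_square_le_1)
qed

lemma trace_norm_finite_rank_le:
  assumes "finite I"
    and u: "\<And>i. i \<in> I \<Longrightarrow> u i \<in> L2 (conf k)" "\<And>i. i \<in> I \<Longrightarrow> Re (inner_L2 (conf k) (u i) (u i)) \<le> 1"
    and K: "\<And>x y. K x y = (\<Sum>i\<in>I. \<Sum>i'\<in>I. D i i' * (u i x * cnj (u i' y)))"
  shows "trace_norm k K \<le> ennreal (\<Sum>i\<in>I. \<Sum>i'\<in>I. cmod (D i i'))"
  unfolding trace_norm_def
proof (rule Sup_least, safe)
  fix m es fs
  assume L: "\<forall>n<m. es n \<in> L2sym k \<and> fs n \<in> L2sym k"
    and e: "orthonormal_fam (conf k) m es" and f: "orthonormal_fam (conf k) m fs"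
  have eL: "es n \<in> L2 (conf k)" and fL: "fs n \<in> L2 (conf k)" if "n < m" for n
    using L that by (auto simp: L2sym_def)
  define \<alpha> where "\<alpha> i' n = cmod (inner_L2 (conf k) (u i') (fs n))" for i' n
  define \<beta> where "\<beta> i n = cmod (inner_L2 (conf k) (es n) (u i))" for i n
  have "(\<Sum>n<m. cmod (inner_L2 (conf k) (es n) (apply_kernel (conf k) K (fs n))))
      \<le> (\<Sum>n<m. \<Sum>i\<in>I. \<Sum>i'\<in>I. cmod (D i i') * (\<alpha> i' n * \<beta> i n))"
  proof (rule sum_mono)
    fix n assume "n \<in> {..<m}"
    then have n: "n < m" by simp
    have "inner_L2 (conf k) (es n) (apply_kernel (conf k) K (fs n))
        = (\<Sum>i\<in>I. \<Sum>i'\<in>I. (D i i' * inner_L2 (conf k) (u i') (fs n)) * inner_L2 (conf k) (es n) (u i))"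
      by (rule inner_L2_apply_kernel_finite_rank[OF assms(1) _ fL[OF n] eL[OF n] K]) (rule u(1))
    then show "cmod (inner_L2 (conf k) (es n) (apply_kernel (conf k) K (fs n)))
        \<le> (\<Sum>i\<in>I. \<Sum>i'\<in>I. cmod (D i i') * (\<alpha> i' n * \<beta> i n))"
      by (simp only:) (intro order_trans[OF norm_sum] sum_mono, simp add: \<alpha>_def \<beta>_def norm_mult)
  qed
  also have "\<dots> = (\<Sum>i\<in>I. \<Sum>i'\<in>I. cmod (D i i') * (\<Sum>n<m. \<alpha> i' n * \<beta> i n))"
    by (simp add: sum_distrib_left sum.swap[of _ "{..<m}"])
  also have "\<dots> \<le> (\<Sum>i\<in>I. \<Sum>i'\<in>I. cmod (D i i'))"
    unfolding \<alpha>_def \<beta>_def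
    by (intro sum_mono mult_left_le sum_cmod_inner_mult_le_1 u eL fL e f) auto
  finally show "ennreal (\<Sum>n<m. cmod (inner_L2 (conf k) (es n) (apply_kernel (conf k) K (fs n))))
      \<le> ennreal (\<Sum>i\<in>I. \<Sum>i'\<in>I. cmod (D i i'))"
    by (rule ennreal_leI)
qed

context orthonormal_pair
begin

lemma trace_norm_sector_kernel_le:
  assumes "\<And>j. j \<le> k \<Longrightarrow> cmod (w j) \<le> B"
  shows "trace_norm k (sector_kernel k w) \<le> ennreal (4 ^ k * B)"
proof -
  have "0 \<le> B"
    using order_trans[OF norm_ge_zero assms[OF le0]] .
  have "trace_norm k (sector_kernel k w) \<le> ennreal (\<Sum>g\<in>words k. \<Sum>g'\<in>words k.
      cmod (if num_a k g = num_a k g' then w (num_a k g) else 0))"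
    by (rule trace_norm_finite_rank_le[where u = "\<lambda>g. tensor g k"])
      (simp_all add: tensor_in_L2 inner_L2_tensor sector_kernel_def)
  also have "\<dots> \<le> ennreal (\<Sum>g\<in>words k. \<Sum>g'\<in>words k. B)"
    using assms num_a_le \<open>0 \<le> B\<close> by (intro ennreal_leI sum_mono) auto
  also have "\<dots> = ennreal (4 ^ k * B)"
  proof -
    have "(2::real) ^ k * 2 ^ k = 4 ^ k"
      by (simp flip: power_mult_distrib)
    then show ?thesis
      by (simp add: card_words mult.assoc[symmetric])
  qed
  finally show ?thesis .
qed

end

section \<open>Hypergeometric versus binomial weights\<close>

lemma fact_div_fact_eq_prod:
  assumes "k \<le> n"
  shows "fact n / fact (n - k) = (\<Prod>i<k. real n - real i)"
  using fact_binomial[OF assms, where 'a = real] gbinomial_mult_fact[of k "real n"]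
  by (simp add: binomial_gbinomial atLeast0LessThan)

text \<open>The probability that a uniformly random arrangement of N1 letters a and N - N1 letters b
  begins with a prescribed word of length k containing j letters a. The guard j \<open>\<le>\<close> N1 is needed
  because N1 - j is truncated subtraction.\<close>

definition hypergeom_weight :: "nat \<Rightarrow> nat \<Rightarrow> nat \<Rightarrow> nat \<Rightarrow> real" where
  "hypergeom_weight N N1 k j = (if j \<le> N1 then real (N - k choose (N1 - j)) else 0) / real (N choose N1)"

lemma hypergeom_weight_eq_prod:
  assumes N: "N1 + N2 = N" and "j \<le> k" "j \<le> N1" "k - j \<le> N2"
  shows "hypergeom_weight N N1 k j
    = (\<Prod>i<k. (if i < j then real N1 - real i else real N2 - real (i - j)) / (real N - real i))"
proof -
  define l where "l = k - j"
  have k: "k = j + l" and "k \<le> N" and "l \<le> N2" and "N - k - (N1 - j) = N2 - l"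
    using assms by (auto simp: l_def)
  have "real (N - k choose (N1 - j)) = fact (N - k) / (fact (N1 - j) * fact (N2 - l))"
    using binomial_fact[of "N1 - j" "N - k", where 'a = real] assms \<open>N - k - (N1 - j) = N2 - l\<close>
    by simp
  moreover have "real (N choose N1) = fact N / (fact N1 * fact N2)"
  proof -
    have "N - N1 = N2"
      using N by simp
    then show ?thesis
      using binomial_fact[of N1 N, where 'a = real] N by simp
  qed
  ultimately have "hypergeom_weight N N1 k j
      = (fact N1 / fact (N1 - j)) * (fact N2 / fact (N2 - l)) / (fact N / fact (N - k))"
    using assms by (simp add: hypergeom_weight_def field_simps)
  also have "\<dots> = (\<Prod>i<j. real N1 - real i) * (\<Prod>i<l. real N2 - real i) / (\<Prod>i<k. real N - real i)"
    unfolding fact_div_fact_eq_prod[OF \<open>j \<le> N1\<close>] fact_div_fact_eq_prod[OF \<open>l \<le> N2\<close>]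
      fact_div_fact_eq_prod[OF \<open>k \<le> N\<close>] ..
  also have "\<dots> = (\<Prod>i<k. (if i < j then real N1 - real i else real N2 - real (i - j)) / (real N - real i))"
    unfolding prod_dividef k prod.lessThan_add by simp
  finally show ?thesis .
qed

lemma sampling_factor_diff_le:
  fixes n m i i' :: real
  assumes "0 \<le> i'" "i' \<le> i" "2 * i \<le> n" "0 < n" "0 \<le> m" "m \<le> n"
  shows "\<bar>(m - i') / (n - i) - m / n\<bar> \<le> 2 * i / n"
proof -
  have n: "0 < n - i"
    using assms by auto
  have "\<bar>m * i - n * i'\<bar> \<le> n * i"
  proof -
    have "m * i \<le> n * i" "n * i' \<le> n * i" "0 \<le> m * i" "0 \<le> n * i'"
      using assms by (auto intro: mult_right_mono mult_left_mono)
    then show ?thesis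
      by arith
  qed
  have "(m - i') / (n - i) - m / n = (m * i - n * i') / (n * (n - i))"
    using assms n by (simp add: field_simps)
  then have "\<bar>(m - i') / (n - i) - m / n\<bar> = \<bar>m * i - n * i'\<bar> / (n * (n - i))"
    using assms n by (simp add: abs_divide)
  also have "\<dots> \<le> (n * i) / (n * (n - i))"
    using assms n \<open>\<bar>m * i - n * i'\<bar> \<le> n * i\<close> by (intro divide_right_mono) auto
  also have "\<dots> = i / (n - i)"
    using assms by simp
  also have "\<dots> \<le> 2 * i / n"
  proof -
    have "i * (2 * i) \<le> n * i"
      using mult_right_mono[OF assms(3), of i] assms by (simp add: ac_simps)
    then show ?thesis
      using assms n by (simp add: field_simps)
  qed
  finally show ?thesis .
qed

lemma choose_diff_le_choose:
  assumes "j \<le> k" "j \<le> m" "k \<le> n"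
  shows "(n - k) choose (m - j) \<le> n choose m"
proof -
  have "1 * ((n - k) choose (m - j)) \<le> (k choose j) * ((n - k) choose (m - j))"
    using zero_less_binomial[OF assms(1)] by (intro mult_le_mono1) linarith
  also have "\<dots> \<le> (\<Sum>i\<le>m. (k choose i) * ((n - k) choose (m - i)))"
    using assms by (intro member_le_sum) auto
  also have "\<dots> = n choose m"
    using vandermonde[of k "n - k" m] assms by simp
  finally show ?thesis
    by simp
qed

lemma hypergeom_weight_le_1:
  assumes "N1 \<le> N" "k \<le> N" "j \<le> k"
  shows "hypergeom_weight N N1 k j \<le> 1"
proof (cases "j \<le> N1")
  case True
  have "real (N - k choose (N1 - j)) \<le> real (N choose N1)"
    using choose_diff_le_choose[of j k N1 N] assms True by simp
  moreover have "0 < real (N choose N1)"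
    using assms by simp
  ultimately show ?thesis
    using True by (simp add: hypergeom_weight_def divide_le_eq_1_pos)
qed (simp add: hypergeom_weight_def)

lemma power_mult_power_le_base:
  fixes p q :: real
  assumes "0 \<le> p" "p \<le> 1" "0 \<le> q" "q \<le> 1" "1 \<le> j"
  shows "p ^ j * q ^ l \<le> p"
proof -
  have "p ^ j * q ^ l \<le> p ^ j"
    using assms by (intro mult_left_le power_le_one) auto
  also have "\<dots> \<le> p ^ 1"
    using assms by (intro power_decreasing) auto
  finally show ?thesis
    by simp
qed

lemma hypergeom_weight_approx_exhausted:
  assumes N: "N1 + N2 = N" "0 < N" and "k \<le> N" "j \<le> k" and exhausted: "N1 < j \<or> N2 < k - j"
  shows "\<bar>hypergeom_weight N N1 k j - (real N1 / real N) ^ j * (real N2 / real N) ^ (k - j)\<bar>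
    \<le> (real k - 1) / real N"
proof -
  have "hypergeom_weight N N1 k j = 0"
    using assms by (auto simp: hypergeom_weight_def binomial_eq_0)
  moreover have "(real N1 / real N) ^ j * (real N2 / real N) ^ (k - j) \<le> (real k - 1) / real N"
    using exhausted
  proof
    assume "N1 < j"
    then have "(real N1 / real N) ^ j * (real N2 / real N) ^ (k - j) \<le> real N1 / real N"
      using N by (intro power_mult_power_le_base) auto
    also have "\<dots> \<le> (real k - 1) / real N"
      using \<open>N1 < j\<close> \<open>j \<le> k\<close> N by (intro divide_right_mono) auto
    finally show ?thesis .
  next
    assume "N2 < k - j"
    then have "(real N2 / real N) ^ (k - j) * (real N1 / real N) ^ j \<le> real N2 / real N"
      using N by (intro power_mult_power_le_base) auto
    also have "\<dots> \<le> (real k - 1) / real N"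
      using \<open>N2 < k - j\<close> N by (intro divide_right_mono) auto
    finally show ?thesis
      by (simp add: mult.commute)
  qed
  ultimately show ?thesis
    using N by simp
qed

lemma hypergeom_weight_approx_fits:
  assumes N: "N1 + N2 = N" and "2 * k \<le> N" "j \<le> k" and fits: "j \<le> N1" "k - j \<le> N2"
  shows "\<bar>hypergeom_weight N N1 k j - (real N1 / real N) ^ j * (real N2 / real N) ^ (k - j)\<bar>
    \<le> 2 * real k * (real k - 1) / real N"
proof -
  define f where "f i = (if i < j then real N1 - real i else real N2 - real (i - j)) / (real N - real i)"
    for i
  define g where "g i = (if i < j then real N1 / real N else real N2 / real N)" for i
  have f: "\<bar>f i\<bar> \<le> 1" and fg: "\<bar>f i - g i\<bar> \<le> 2 * (real k - 1) / real N" if "i < k" for i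
  proof -
    have i: "2 * real i \<le> real N" "0 < real N"
      using that assms by linarith+
    show "\<bar>f i\<bar> \<le> 1"
      using that assms by (auto simp: f_def)
    have "\<bar>f i - g i\<bar> \<le> 2 * real i / real N"
      using i N by (auto simp: f_def g_def intro!: sampling_factor_diff_le)
    also have "\<dots> \<le> 2 * (real k - 1) / real N"
      using that by (intro divide_right_mono) auto
    finally show "\<bar>f i - g i\<bar> \<le> 2 * (real k - 1) / real N" .
  qed
  have g: "\<bar>g i\<bar> \<le> 1" for i
    using N by (auto simp: g_def divide_le_eq_1)
  have "hypergeom_weight N N1 k j = (\<Prod>i<k. f i)"
    unfolding f_def using N \<open>j \<le> k\<close> fits by (rule hypergeom_weight_eq_prod)
  moreover have "(real N1 / real N) ^ j * (real N2 / real N) ^ (k - j) = (\<Prod>i<k. g i)"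
    using assms prod.lessThan_add[of g j "k - j"] by (simp add: g_def)
  ultimately have "\<bar>hypergeom_weight N N1 k j - (real N1 / real N) ^ j * (real N2 / real N) ^ (k - j)\<bar>
      = \<bar>(\<Prod>i<k. f i) - (\<Prod>i<k. g i)\<bar>"
    by (simp only:)
  also have "\<dots> \<le> (\<Sum>i<k. \<bar>f i - g i\<bar>)"
    using norm_prod_diff[of "{..<k}" f g] f g by simp
  also have "\<dots> \<le> (\<Sum>i<k. 2 * (real k - 1) / real N)"
    by (rule sum_mono) (rule fg, simp)
  also have "\<dots> = 2 * real k * (real k - 1) / real N"
    by (simp add: ac_simps)
  finally show ?thesis .
qed

lemma hypergeom_weight_approx_large:
  assumes N: "N1 + N2 = N" "2 \<le> N" and "N < 2 * k" "k \<le> N" "j \<le> k"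
  shows "\<bar>hypergeom_weight N N1 k j - (real N1 / real N) ^ j * (real N2 / real N) ^ (k - j)\<bar>
    \<le> 2 * real k * (real k - 1) / real N"
proof -
  have "0 \<le> hypergeom_weight N N1 k j" "hypergeom_weight N N1 k j \<le> 1"
    using hypergeom_weight_le_1[of N1 N k j] assms by (auto simp: hypergeom_weight_def)
  moreover have "0 \<le> (real N1 / real N) ^ j * (real N2 / real N) ^ (k - j)"
    "(real N1 / real N) ^ j * (real N2 / real N) ^ (k - j) \<le> 1"
    using N by (auto intro!: mult_le_one power_le_one)
  moreover have "1 \<le> 2 * real k * (real k - 1) / real N"
  proof -
    have "2 \<le> k"
      using assms by linarith
    then have "2 * real k * 1 \<le> 2 * real k * (real k - 1)"
      by (intro mult_left_mono) auto
    then have "real N \<le> 2 * real k * (real k - 1)"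
      using assms by linarith
    then show ?thesis
      using N by simp
  qed
  ultimately show ?thesis
    by linarith
qed

lemma hypergeom_weight_approx:
  assumes N: "N1 + N2 = N" "2 \<le> N" and "k \<le> N" "j \<le> k"
  shows "\<bar>hypergeom_weight N N1 k j - (real N1 / real N) ^ j * (real N2 / real N) ^ (k - j)\<bar>
    \<le> 2 * real k * (real k - 1) / real N"
proof -
  consider "N1 < j \<or> N2 < k - j" | "j \<le> N1" "k - j \<le> N2" "2 * k \<le> N" | "N < 2 * k"
    by linarith
  then show ?thesis
  proof cases
    case 1
    then have "1 \<le> k"
      using \<open>j \<le> k\<close> by linarith
    then have "(real k - 1) / real N \<le> 2 * real k * (real k - 1) / real N"
      using mult_right_mono[of 1 "2 * real k" "real k - 1"] by (intro divide_right_mono) auto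
    with 1 show ?thesis
      using hypergeom_weight_approx_exhausted[of N1 N2 N k j] assms by simp
  next
    case 2
    then show ?thesis
      using hypergeom_weight_approx_fits assms by blast
  next
    case 3
    then show ?thesis
      using hypergeom_weight_approx_large assms by blast
  qed
qed

section \<open>The marginals\<close>

lemma sum_binomial_shifted_powers:
  fixes p q :: "'a::comm_semiring_1"
  assumes "j \<le> k" "k \<le> N"
  shows "(\<Sum>r\<le>N - k. of_nat (N - k choose r) * (p ^ (j + r) * q ^ (N - (j + r))))
    = p ^ j * q ^ (k - j) * (p + q) ^ (N - k)"
  unfolding binomial_ring sum_distrib_left
proof (intro sum.cong refl)
  fix r assume "r \<in> {..N - k}"
  then have "N - (j + r) = (k - j) + (N - k - r)"
    using assms by simp
  then show "of_nat (N - k choose r) * (p ^ (j + r) * q ^ (N - (j + r)))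
      = p ^ j * q ^ (k - j) * (of_nat (N - k choose r) * p ^ r * q ^ (N - k - r))"
    by (simp add: power_add ac_simps)
qed

lemma sum_choose_indicator:
  fixes c :: "'a::comm_semiring_1"
  shows "(\<Sum>r\<le>n. of_nat (n choose r) * (if j + r = m then c else 0))
    = (if j \<le> m then of_nat (n choose (m - j)) * c else 0)"
proof (cases "j \<le> m")
  case True
  have "(\<Sum>r\<le>n. of_nat (n choose r) * (if j + r = m then c else 0))
      = (\<Sum>r\<le>n. if r = m - j then of_nat (n choose r) * c else 0)"
    using True by (intro sum.cong) auto
  also have "\<dots> = of_nat (n choose (m - j)) * c"
    by (simp add: binomial_eq_0)
  finally show ?thesis
    using True by simp
qed simp

context orthonormal_pair
begin

lemma marginal_vee2:
  assumes "N1 + N2 = N" "k \<le> N"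
  shows "marginal N k (proj_kernel (vee2 a N1 b N2))
    = sector_kernel k (\<lambda>j. complex_of_real (hypergeom_weight N N1 k j))"
proof -
  have "marginal N k (proj_kernel (vee2 a N1 b N2)) = sector_kernel k (\<lambda>j. \<Sum>r\<le>N - k.
      of_nat (N - k choose r) * (if j + r = N1 then 1 / of_nat (N choose N1) else 0))"
    using marginal_sector_kernel[OF assms(2)] proj_kernel_vee2[of N1 N2, unfolded assms(1)] by simp
  also have "\<dots> = sector_kernel k (\<lambda>j. complex_of_real (hypergeom_weight N N1 k j))"
    by (intro arg_cong[where f = "sector_kernel k"] ext) (simp add: sum_choose_indicator hypergeom_weight_def)
  finally show ?thesis .
qed

lemma marginal_mixed_kernel:
  assumes "N1 + N2 = N" "k \<le> N"
  shows "marginal N k (mixed_kernel a N1 b N2 N)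
    = sector_kernel k (\<lambda>j. complex_of_real ((real N1 / real N) ^ j * (real N2 / real N) ^ (k - j)))"
  unfolding mixed_kernel_eq_sector_kernel marginal_sector_kernel[OF assms(2)]
proof (rule sector_kernel_cong)
  fix j assume "j \<le> k"
  define p where "p = real N1 / real N"
  define q where "q = real N2 / real N"
  have "(p + q) ^ (N - k) = 1"
    using assms
    by (cases "N = 0") (simp_all add: p_def q_def add_divide_distrib[symmetric] flip: of_nat_add)
  then have "(\<Sum>r\<le>N - k. real (N - k choose r) * (p ^ (j + r) * q ^ (N - (j + r)))) = p ^ j * q ^ (k - j)"
    using sum_binomial_shifted_powers[OF \<open>j \<le> k\<close> assms(2), of p q] by simp
  moreover have "(\<Sum>r\<le>N - k. of_nat (N - k choose r) * complex_of_real (p ^ (j + r) * q ^ (N - (j + r))))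
      = complex_of_real (\<Sum>r\<le>N - k. real (N - k choose r) * (p ^ (j + r) * q ^ (N - (j + r))))"
    by simp
  ultimately show "(\<Sum>r\<le>N - k. of_nat (N - k choose r) * complex_of_real
        ((real N1 / real N) ^ (j + r) * (real N2 / real N) ^ (N - (j + r))))
      = complex_of_real ((real N1 / real N) ^ j * (real N2 / real N) ^ (k - j))"
    by (simp only: p_def q_def)
qed

lemma trace_norm_marginal_diff_le:
  assumes N: "N1 + N2 = N" "2 \<le> N" "k \<le> N"
  shows "trace_norm k (\<lambda>x y. marginal N k (proj_kernel (vee2 a N1 b N2)) x y
      - marginal N k (mixed_kernel a N1 b N2 N) x y)
    \<le> ennreal (4 ^ k * (2 * real k * (real k - 1)) / real N)"
proof -
  have "(\<lambda>x y. marginal N k (proj_kernel (vee2 a N1 b N2)) x y - marginal N k (mixed_kernel a N1 b N2 N) x y)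
    = sector_kernel k (\<lambda>j. complex_of_real
        (hypergeom_weight N N1 k j - (real N1 / real N) ^ j * (real N2 / real N) ^ (k - j)))"
    by (intro ext) (simp add: marginal_vee2[OF N(1,3)] marginal_mixed_kernel[OF N(1,3)] sector_kernel_diff)
  moreover have "trace_norm k (sector_kernel k (\<lambda>j. complex_of_real
        (hypergeom_weight N N1 k j - (real N1 / real N) ^ j * (real N2 / real N) ^ (k - j))))
      \<le> ennreal (4 ^ k * (2 * real k * (real k - 1) / real N))"
  proof (rule trace_norm_sector_kernel_le)
    fix j assume "j \<le> k"
    show "cmod (complex_of_real
        (hypergeom_weight N N1 k j - (real N1 / real N) ^ j * (real N2 / real N) ^ (k - j)))
      \<le> 2 * real k * (real k - 1) / real N"
      unfolding norm_of_real by (rule hypergeom_weight_approx[OF N \<open>j \<le> k\<close>])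
  qed
  ultimately show ?thesis
    by simp
qed

end

theorem mainTheorem3:
  fixes \<phi>1 \<phi>2 :: "real^3 \<Rightarrow> complex"
    and N1 N2 :: "nat \<Rightarrow> nat"
    and n1 n2 :: real
  assumes L2: "\<phi>1 \<in> L2 (lborel :: (real^3) measure)" "\<phi>2 \<in> L2 (lborel :: (real^3) measure)"
    and on: "inner_L2 lborel \<phi>1 \<phi>1 = 1" "inner_L2 lborel \<phi>2 \<phi>2 = 1" "inner_L2 lborel \<phi>1 \<phi>2 = 0"
    and sumN: "\<And>N. N \<ge> 2 \<Longrightarrow> N1 N + N2 N = N"
    and lim1: "(\<lambda>N. real (N1 N) / real N) \<longlonglongrightarrow> n1" and n1: "0 < n1" "n1 < 1"
    and lim2: "(\<lambda>N. real (N2 N) / real N) \<longlonglongrightarrow> n2" and n2: "0 < n2" "n2 < 1"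
  shows "\<forall>k::nat. \<exists>c::real. c \<ge> 0 \<and> (k = 1 \<longrightarrow> c = 0) \<and>
     (\<forall>N::nat. N \<ge> 2 \<and> N \<ge> k \<longrightarrow>
        trace_norm k (\<lambda>x y.
            marginal N k (proj_kernel (vee2 \<phi>1 (N1 N) \<phi>2 (N2 N))) x y
          - marginal N k (mixed_kernel \<phi>1 (N1 N) \<phi>2 (N2 N) N) x y)
        \<le> ennreal (c / real N))"
proof
  fix k :: nat
  interpret orthonormal_pair \<phi>1 \<phi>2
    using L2 on by unfold_locales
  define c where "c = 4 ^ k * (2 * real k * (real k - 1))"
  have "c \<ge> 0" and "k = 1 \<longrightarrow> c = 0"
    by (cases k) (auto simp: c_def)
  moreover have "\<forall>N. N \<ge> 2 \<and> N \<ge> k \<longrightarrow>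
      trace_norm k (\<lambda>x y.
          marginal N k (proj_kernel (vee2 \<phi>1 (N1 N) \<phi>2 (N2 N))) x y
        - marginal N k (mixed_kernel \<phi>1 (N1 N) \<phi>2 (N2 N) N) x y)
      \<le> ennreal (c / real N)"
    unfolding c_def using sumN by (auto intro!: trace_norm_marginal_diff_le)
  ultimately show "\<exists>c::real. c \<ge> 0 \<and> (k = 1 \<longrightarrow> c = 0) \<and>
     (\<forall>N::nat. N \<ge> 2 \<and> N \<ge> k \<longrightarrow>
        trace_norm k (\<lambda>x y.
            marginal N k (proj_kernel (vee2 \<phi>1 (N1 N) \<phi>2 (N2 N))) x y
          - marginal N k (mixed_kernel \<phi>1 (N1 N) \<phi>2 (N2 N) N) x y)
        \<le> ennreal (c / real N))"
    by blast
qed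

end
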